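(* Let $(X,d)$ be a Polish metric space, $1<p<\infty$, $E:\mathcal P_p(X)\to(-\infty,+\infty]$ proper and $G:\mathcal P_p(X)\to[0,+\infty]$ a weak upper gradient for $E$. Fix $\rho_0\in Z_{E,p}$ and a $p$-curve of maximal slope $\rho$ for $E$ w.r.t. $G$ with $\rho(0)=\rho_0$. Assume (A1), (A3) and either (A2) or (A2'). Then the trajectory $\bigcup_{t\ge0}\{\rho(t)\}$ is relatively compact in $\mathcal P_p(X)$ with respect to the $\sigma$-topology.
   Context: $\mathcal P(X)$: Borel probability measures with the narrow topology; $\mathcal P_p(X)$: those with finite $p$-th moment, with the $p$-Wasserstein distance $W_p$; the $\sigma$-topology on $\mathcal P_p(X)$ is the narrow topology restricted to $\mathcal P_p(X)$. $q=p/(p-1)$. $\rho\in AC([0,\infty);\mathcal P_p(X))$ means: for each $T>0$ there is $m\in L^1([0,T])$ with $W_p(\rho(t),\rho(s))\le\int_s^tm$ for $0\le s<t\le T$; metric derivative $|\rho'|(t)=\lim_{s\to t}W_p(\rho(t),\rho(s))/|t-s|$. $G$ is a weak upper gradient for $E$ if for every absolutely continuous curve $\rho$ on $[0,T]$ with $(G\circ\rho)|\rho'|\in L^1([0,T])$, $E\circ\rho$ is a.e. equal to a function $\varphi$ of finite pointwise variation with $|\varphi'|\le G(\rho)|\rho'|$ a.e. A $p$-curve of maximal slope is $\rho\in AC([0,\infty);\mathcal P_p(X))$ with $E\circ\rho$ a.e. equal to a non-increasing $\varphi$ satisfying $\varphi'(t)=-\frac1p|\rho'|^p(t)-\frac1qG^q(\rho(t))$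 for a.e. $t$. $Z_{E,p}=\{\mu\in\mathcal P_p(X):E(\mu)<\infty\}$. (A1) $E$ proper, bounded below, l.s.c. w.r.t. the $\sigma$-topology. (A2) For every $C\in\mathbb R$, $\{\mu\in\mathcal P_p(X):E(\mu)\le C\}$ is relatively compact in the $\sigma$-topology. (A2') There is $\mathcal Y\subset\mathcal P_p(X)$ containing $\rho(t)$ for all $t\ge0$ such that $\{\mu\in\mathcal P_p(X)\cap\mathcal Y:E(\mu)\le C\}$ is relatively compact in the $\sigma$-topology for every $C$. (A3) $G$ l.s.c. w.r.t. the $\sigma$-topology. *)

theory Defs
  imports "HOL-Probability.Probability"
begin

definition prob_measures :: "'a::polish_space measure set" where
  "prob_measures = {\<mu>. prob_space \<mu> \<and> sets \<mu> = sets borel}"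

definition Pp :: "real \<Rightarrow> 'a::polish_space measure set" where
  "Pp p = {\<mu> \<in> prob_measures. \<exists>x0. (\<integral>\<^sup>+ x. ennreal (dist x x0 powr p) \<partial>\<mu>) < \<infinity>}"

definition narrow_topology :: "'a::polish_space measure topology" where
  "narrow_topology = topology_generated_by
     {{\<mu> \<in> prob_measures. (\<integral>x. f x \<partial>\<mu>) \<in> U} | f U.
        continuous_on UNIV f \<and> bounded (range f) \<and> open (U :: real set)}"

definition sigma_top :: "real \<Rightarrow> 'a::polish_space measure topology" where
  "sigma_top p = subtopology narrow_topology (Pp p)"

definition couplings :: "'a::polish_space measure \<Rightarrow> 'a measure \<Rightarrow> ('a \<times> 'a) measure set" where
  "couplings \<mu> \<nu> = {\<gamma>. prob_space \<gamma> \<and> sets \<gamma> = sets borel \<and>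
                        distr \<gamma> borel fst = \<mu> \<and> distr \<gamma> borel snd = \<nu>}"

definition Wp :: "real \<Rightarrow> 'a::polish_space measure \<Rightarrow> 'a measure \<Rightarrow> real" where
  "Wp p \<mu> \<nu> = (enn2real (INF \<gamma>\<in>couplings \<mu> \<nu>.
       \<integral>\<^sup>+ z. ennreal (dist (fst z) (snd z) powr p) \<partial>\<gamma>)) powr (1 / p)"

definition rel_compact_in :: "'b topology \<Rightarrow> 'b set \<Rightarrow> bool" where
  "rel_compact_in T S \<longleftrightarrow> S \<subseteq> topspace T \<and> compactin T (T closure_of S)"

definition ac_on :: "real \<Rightarrow> real \<Rightarrow> (real \<Rightarrow> 'a::polish_space measure) \<Rightarrow> bool" where
  "ac_on p T \<rho> \<longleftrightarrow> (\<forall>t\<in>{0..T}. \<rho> t \<in> Pp p) \<and>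
     (\<exists>m. set_integrable lborel {0..T} m \<and>
        (\<forall>s t. 0 \<le> s \<and> s < t \<and> t \<le> T \<longrightarrow>
           Wp p (\<rho> t) (\<rho> s) \<le> (LINT \<tau>:{s..t}|lborel. m \<tau>)))"

definition ac_infty :: "real \<Rightarrow> (real \<Rightarrow> 'a::polish_space measure) \<Rightarrow> bool" where
  "ac_infty p \<rho> \<longleftrightarrow> (\<forall>t\<ge>0. \<rho> t \<in> Pp p) \<and> (\<forall>T>0. ac_on p T \<rho>)"

definition metric_deriv :: "real \<Rightarrow> real set \<Rightarrow> (real \<Rightarrow> 'a::polish_space measure) \<Rightarrow> real \<Rightarrow> real" where
  "metric_deriv p S \<rho> t = Lim (at t within S) (\<lambda>s. Wp p (\<rho> t) (\<rho> s) / \<bar>t - s\<bar>)"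

definition finite_pvar :: "real \<Rightarrow> (real \<Rightarrow> real) \<Rightarrow> bool" where
  "finite_pvar T \<phi> \<longleftrightarrow> (\<exists>B. \<forall>n (t :: nat \<Rightarrow> real).
      (\<forall>i<n. t i < t (Suc i)) \<and> 0 \<le> t 0 \<and> t n \<le> T \<longrightarrow>
      (\<Sum>i<n. \<bar>\<phi> (t (Suc i)) - \<phi> (t i)\<bar>) \<le> B)"

definition weak_upper_gradient ::
  "real \<Rightarrow> ('a::polish_space measure \<Rightarrow> ereal) \<Rightarrow> ('a measure \<Rightarrow> ennreal) \<Rightarrow> bool" where
  "weak_upper_gradient p E G \<longleftrightarrow>
    (\<forall>T>0. \<forall>\<rho>. ac_on p T \<rho> \<and>
       (\<lambda>t. G (\<rho> t) * ennreal (metric_deriv p {0..T} \<rho> t))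
          \<in> borel_measurable (restrict_space lborel {0..T}) \<and>
       (\<integral>\<^sup>+ t\<in>{0..T}. G (\<rho> t) * ennreal (metric_deriv p {0..T} \<rho> t) \<partial>lborel) < \<infinity>
     \<longrightarrow> (\<exists>\<phi>. finite_pvar T \<phi> \<and>
            (AE t in lborel. t \<in> {0..T} \<longrightarrow> E (\<rho> t) = ereal (\<phi> t)) \<and>
            (AE t in lborel. t \<in> {0<..<T} \<longrightarrow>
               (\<exists>D. (\<phi> has_real_derivative D) (at t) \<and>
                    ennreal \<bar>D\<bar> \<le> G (\<rho> t) * ennreal (metric_deriv p {0..T} \<rho> t)))))"

definition curve_max_slope ::
  "real \<Rightarrow> ('a::polish_space measure \<Rightarrow> ereal) \<Rightarrow> ('a measure \<Rightarrow> ennreal) \<Rightarrow> (real \<Rightarrow> 'a measure) \<Rightarrow> bool" where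
  "curve_max_slope p E G \<rho> \<longleftrightarrow> ac_infty p \<rho> \<and>
    (\<exists>\<phi>. (\<forall>s t. 0 \<le> s \<and> s \<le> t \<longrightarrow> \<phi> t \<le> \<phi> s) \<and>
         (AE t in lborel. t \<ge> 0 \<longrightarrow> E (\<rho> t) = ereal (\<phi> t)) \<and>
         (AE t in lborel. t > 0 \<longrightarrow> G (\<rho> t) \<noteq> \<infinity> \<and>
            (\<phi> has_real_derivative
               (- (1 / p) * metric_deriv p {0..} \<rho> t powr p
                - (1 / (p / (p - 1))) * enn2real (G (\<rho> t)) powr (p / (p - 1)))) (at t)))"

definition Z_set :: "real \<Rightarrow> ('a::polish_space measure \<Rightarrow> ereal) \<Rightarrow> 'a measure set" where
  "Z_set p E = {\<mu> \<in> Pp p. E \<mu> < \<infinity>}"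

definition proper_fun :: "real \<Rightarrow> ('a::polish_space measure \<Rightarrow> ereal) \<Rightarrow> bool" where
  "proper_fun p E \<longleftrightarrow> (\<forall>\<mu>\<in>Pp p. E \<mu> \<noteq> -\<infinity>) \<and> (\<exists>\<mu>\<in>Pp p. E \<mu> < \<infinity>)"

definition A1 :: "real \<Rightarrow> ('a::polish_space measure \<Rightarrow> ereal) \<Rightarrow> bool" where
  "A1 p E \<longleftrightarrow> proper_fun p E \<and> (\<exists>c::real. \<forall>\<mu>\<in>Pp p. ereal c \<le> E \<mu>) \<and>
     (\<forall>c. closedin (sigma_top p) {\<mu> \<in> Pp p. E \<mu> \<le> c})"

definition A2 :: "real \<Rightarrow> ('a::polish_space measure \<Rightarrow> ereal) \<Rightarrow> bool" where
  "A2 p E \<longleftrightarrow> (\<forall>C::real. rel_compact_in (sigma_top p) {\<mu> \<in> Pp p. E \<mu> \<le> ereal C})"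

definition A2' :: "real \<Rightarrow> ('a::polish_space measure \<Rightarrow> ereal) \<Rightarrow> (real \<Rightarrow> 'a measure) \<Rightarrow> bool" where
  "A2' p E \<rho> \<longleftrightarrow> (\<exists>Y \<subseteq> Pp p. (\<forall>t\<ge>0. \<rho> t \<in> Y) \<and>
      (\<forall>C::real. rel_compact_in (sigma_top p) {\<mu> \<in> Pp p \<inter> Y. E \<mu> \<le> ereal C}))"

definition A3 :: "real \<Rightarrow> ('a::polish_space measure \<Rightarrow> ennreal) \<Rightarrow> bool" where
  "A3 p G \<longleftrightarrow> (\<forall>c. closedin (sigma_top p) {\<mu> \<in> Pp p. G \<mu> \<le> c})"

end

theory Submission
  imports Defs
begin

text \<open>Along a curve of maximal slope \<open>E \<circ> \<rho>\<close> agrees a.e. with a non-increasing \<open>\<phi>\<close>, so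
\<open>E (\<rho> t) \<le> max (\<phi> 0) (E \<rho>\<^sub>0)\<close> for almost every \<open>t\<close>. An absolutely continuous curve is
\<open>W\<^sub>p\<close>-continuous, and \<open>W\<^sub>p\<close>-convergence implies narrow convergence (couple the two measures,
then use tightness of the limit and uniform continuity of the test function near a compact set).
As sublevel sets of \<open>E\<close> are \<open>\<sigma>\<close>-closed by (A1), the bound holds at every time, so the
trajectory lies in one sublevel set, which is relatively compact by (A2) or (A2').\<close>

lemma limitin_topology_generated_byI:
  assumes "l \<in> \<Union>S" "\<And>U. U \<in> S \<Longrightarrow> l \<in> U \<Longrightarrow> eventually (\<lambda>x. f x \<in> U) F"
  shows "limitin (topology_generated_by S) f l F"
  unfolding limitin_def
proof (intro conjI allI impI)
  show "l \<in> topspace (topology_generated_by S)" using assms(1) by simp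
  fix U assume "openin (topology_generated_by S) U \<and> l \<in> U"
  then have gen: "generate_topology_on S U" and "l \<in> U"
    by (auto dest: openin_topology_generated_by)
  have "l \<in> U \<longrightarrow> eventually (\<lambda>x. f x \<in> U) F" using gen
  proof (induct rule: generate_topology_on.induct)
    case (Int a b) then show ?case by (auto intro: eventually_conj)
  next
    case (UN K)
    show ?case
    proof
      assume "l \<in> \<Union>K"
      then obtain k where "k \<in> K" "l \<in> k" by blast
      then have "eventually (\<lambda>x. f x \<in> k) F" using UN(2) by blast
      then show "eventually (\<lambda>x. f x \<in> \<Union>K) F"
        by (rule eventually_mono) (use \<open>k \<in> K\<close> in blast)
    qed
  next
    case (Basis s) then show ?case using assms(2) by auto
  qed simp
  then show "eventually (\<lambda>x. f x \<in> U) F" using \<open>l \<in> U\<close> by simp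
qed

lemma rel_compact_in_subset:
  assumes "rel_compact_in T S'" "S \<subseteq> S'"
  shows "rel_compact_in T S"
  using assms unfolding rel_compact_in_def
  by (meson closed_compactin closedin_closure_of closure_of_mono order_trans)

lemma AE_lborel_exists_between:
  assumes "AE x in lborel. P x" "(a::real) < b"
  shows "\<exists>x. a < x \<and> x < b \<and> P x"
proof (rule ccontr)
  assume none: "\<not> ?thesis"
  from assms(1) obtain N where N: "{x. \<not> P x} \<subseteq> N" "N \<in> sets lborel" "emeasure lborel N = 0"
    by (auto elim!: AE_E)
  have "{a<..<b} \<subseteq> N" using none N(1) by auto
  then have "emeasure lborel {a<..<b} \<le> emeasure lborel N" using N(2) by (intro emeasure_mono) auto
  then show False using N(3) assms(2) by simp
qed

lemma AE_lborel_obtain_seq_from_left: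
  fixes t :: real
  assumes "AE x in lborel. P x" "a < t"
  obtains s where "s \<longlonglongrightarrow> t" "\<And>n. a < s n \<and> s n < t \<and> P (s n)"
proof -
  have "\<exists>x. max a (t - inverse (Suc n)) < x \<and> x < t \<and> P x" for n :: nat
    using assms by (intro AE_lborel_exists_between) auto
  then obtain s where s: "\<And>n. max a (t - inverse (Suc n)) < s n \<and> s n < t \<and> P (s n)"
    by (metis (no_types))
  have lim: "(\<lambda>n. t - inverse (real (Suc n))) \<longlonglongrightarrow> t"
    using tendsto_diff[OF tendsto_const LIMSEQ_inverse_real_of_nat, of t] by simp
  have lower: "\<forall>n. t - inverse (real (Suc n)) \<le> s n" and upper: "\<forall>n. s n \<le> t"
    using s by (simp_all add: less_imp_le)
  have "s \<longlonglongrightarrow> t"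
    using tendsto_sandwich[OF always_eventually always_eventually, OF lower upper lim tendsto_const] .
  then show ?thesis using s by (intro that) auto
qed

lemma continuous_uniformly_near_compact:
  fixes f :: "'a::metric_space \<Rightarrow> 'b::metric_space"
  assumes "continuous_on UNIV f" "compact K" "0 < e"
  obtains d where "0 < d" "\<And>x y. x \<in> K \<Longrightarrow> dist x y < d \<Longrightarrow> dist (f x) (f y) < e"
proof -
  let ?\<G> = "range (\<lambda>z. f -` ball (f z) (e/2))"
  have "open G" if "G \<in> ?\<G>" for G
    using that assms(1) by (auto intro!: open_vimage)
  moreover have "K \<subseteq> \<Union>?\<G>"
  proof
    fix x assume "x \<in> K"
    have "x \<in> f -` ball (f x) (e/2)" using assms(3) by simp
    then show "x \<in> \<Union>?\<G>" by blast
  qed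
  ultimately obtain d where d: "0 < d" "\<And>x. x \<in> K \<Longrightarrow> \<exists>G\<in>?\<G>. ball x d \<subseteq> G"
    using Heine_Borel_lemma[OF assms(2)] by blast
  show ?thesis
  proof (rule that[OF d(1)])
    fix x y assume "x \<in> K" "dist x y < d"
    then obtain z where z: "ball x d \<subseteq> f -` ball (f z) (e/2)" using d(2) by blast
    have "x \<in> ball x d" "y \<in> ball x d" using d(1) \<open>dist x y < d\<close> by auto
    then have "f x \<in> ball (f z) (e/2)" "f y \<in> ball (f z) (e/2)" using z by blast+
    then have "dist (f z) (f x) < e/2" "dist (f z) (f y) < e/2" by (simp_all only: mem_ball)
    then show "dist (f x) (f y) < e" by (rule dist_triangle_half_r)
  qed
qed

lemma prob_space_polish_tight:
  fixes \<mu> :: "'a::polish_space measure"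
  assumes "prob_space \<mu>" "sets \<mu> = sets borel" "0 < e"
  obtains K where "compact K" "measure \<mu> (- K) < e"
proof -
  interpret prob_space \<mu> by fact
  have space: "space \<mu> = UNIV" using assms(2) by (metis sets_eq_imp_space_eq space_borel)
  have "emeasure \<mu> UNIV = (SUP K \<in> {K. K \<subseteq> UNIV \<and> compact K}. emeasure \<mu> K)"
    by (rule inner_regular) (use assms space in auto)
  moreover have "emeasure \<mu> UNIV = 1" using emeasure_space_1 space by simp
  ultimately have "ennreal (1 - e) < (SUP K \<in> {K. K \<subseteq> UNIV \<and> compact K}. emeasure \<mu> K)"
    using assms(3) by (simp add: ennreal_lessI)
  then obtain K where K: "compact K" "ennreal (1 - e) < emeasure \<mu> K"
    by (auto simp: less_SUP_iff)
  have "K \<in> sets \<mu>" using K(1) assms(2) compact_imp_closed borel_closed by auto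
  have "1 - e < measure \<mu> K"
  proof (cases "0 \<le> 1 - e")
    case True then show ?thesis using K(2) by (simp add: emeasure_eq_measure ennreal_less_iff)
  next
    case False then show ?thesis by (smt (verit) measure_nonneg)
  qed
  moreover have "measure \<mu> (- K) = 1 - measure \<mu> K"
    using prob_compl[OF \<open>K \<in> sets \<mu>\<close>] space by (simp add: Compl_eq_Diff_UNIV)
  ultimately show ?thesis using that K(1) by auto
qed

definition transport_cost :: "real \<Rightarrow> ('a::metric_space \<times> 'a) measure \<Rightarrow> ennreal" where
  "transport_cost p \<gamma> = (\<integral>\<^sup>+z. ennreal (dist (fst z) (snd z) powr p) \<partial>\<gamma>)"

lemma Wp_transport_cost:
  "Wp p \<mu> \<nu> = enn2real (INF \<gamma>\<in>couplings \<mu> \<nu>. transport_cost p \<gamma>) powr (1 / p)"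
  by (simp add: Wp_def transport_cost_def)

lemma couplingsD:
  assumes "\<gamma> \<in> couplings \<mu> \<nu>"
  shows "prob_space \<gamma>" "sets \<gamma> = sets borel" "distr \<gamma> borel fst = \<mu>" "distr \<gamma> borel snd = \<nu>"
  using assms by (auto simp: couplings_def)

lemma measurable_couplings:
  fixes \<gamma> :: "('a::polish_space \<times> 'a) measure"
  assumes "\<gamma> \<in> couplings \<mu> \<nu>"
  shows "fst \<in> measurable \<gamma> borel" "snd \<in> measurable \<gamma> borel"
  unfolding measurable_cong_sets[OF couplingsD(2)[OF assms] refl]
  by (auto intro!: borel_measurable_continuous_onI continuous_intros)

lemma nn_integral_couplings:
  fixes \<gamma> :: "('a::polish_space \<times> 'a) measure"
  assumes "\<gamma> \<in> couplings \<mu> \<nu>" "g \<in> borel_measurable borel"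
  shows "(\<integral>\<^sup>+z. g (fst z) \<partial>\<gamma>) = (\<integral>\<^sup>+x. g x \<partial>\<mu>)" "(\<integral>\<^sup>+z. g (snd z) \<partial>\<gamma>) = (\<integral>\<^sup>+x. g x \<partial>\<nu>)"
  unfolding couplingsD(3,4)[OF assms(1), symmetric]
  using assms(2) by (simp_all add: nn_integral_distr measurable_couplings[OF assms(1)])

lemma integral_couplings:
  fixes \<gamma> :: "('a::polish_space \<times> 'a) measure" and g :: "'a \<Rightarrow> real"
  assumes "\<gamma> \<in> couplings \<mu> \<nu>" "g \<in> borel_measurable borel"
  shows "(\<integral>z. g (fst z) \<partial>\<gamma>) = (\<integral>x. g x \<partial>\<mu>)" "(\<integral>z. g (snd z) \<partial>\<gamma>) = (\<integral>x. g x \<partial>\<nu>)"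
  unfolding couplingsD(3,4)[OF assms(1), symmetric]
  using assms(2) by (simp_all add: integral_distr measurable_couplings[OF assms(1)])

lemma pair_measure_couplings:
  fixes \<mu> \<nu> :: "'a::polish_space measure"
  assumes "prob_space \<mu>" "sets \<mu> = sets borel" "prob_space \<nu>" "sets \<nu> = sets borel"
  shows "\<mu> \<Otimes>\<^sub>M \<nu> \<in> couplings \<mu> \<nu>"
proof -
  interpret M: prob_space \<mu> by fact
  interpret N: prob_space \<nu> by fact
  interpret pair_prob_space \<mu> \<nu> ..
  have sets: "sets (\<mu> \<Otimes>\<^sub>M \<nu>) = sets borel"
    using sets_pair_measure_cong[OF assms(2,4)] borel_prod by metis
  have "distr (\<mu> \<Otimes>\<^sub>M \<nu>) borel fst = distr (\<mu> \<Otimes>\<^sub>M \<nu>) \<mu> fst"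
    by (rule distr_cong) (use assms(2) in auto)
  also have "\<dots> = \<mu>" by (rule N.distr_pair_fst)
  finally have fst: "distr (\<mu> \<Otimes>\<^sub>M \<nu>) borel fst = \<mu>" .
  have "distr (\<mu> \<Otimes>\<^sub>M \<nu>) borel snd = distr (\<mu> \<Otimes>\<^sub>M \<nu>) \<nu> snd"
    by (rule distr_cong) (use assms(4) in auto)
  also have "\<dots> = \<nu>"
  proof (rule measure_eqI)
    fix A assume A: "A \<in> sets (distr (\<mu> \<Otimes>\<^sub>M \<nu>) \<nu> snd)"
    then have "emeasure (distr (\<mu> \<Otimes>\<^sub>M \<nu>) \<nu> snd) A = emeasure (\<mu> \<Otimes>\<^sub>M \<nu>) (space \<mu> \<times> A)"
      by (auto simp: emeasure_distr space_pair_measure dest: sets.sets_into_space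
          intro!: arg_cong2[where f=emeasure])
    with A show "emeasure (distr (\<mu> \<Otimes>\<^sub>M \<nu>) \<nu> snd) A = emeasure \<nu> A"
      by (simp add: N.emeasure_pair_measure_Times M.emeasure_space_1)
  qed simp
  finally have snd: "distr (\<mu> \<Otimes>\<^sub>M \<nu>) borel snd = \<nu>" .
  show ?thesis
    using prob_space_pair[OF assms(1,3)] sets fst snd by (simp add: couplings_def)
qed

lemma dist_powr_le_three:
  fixes x y a b :: "'a::metric_space"
  assumes "0 \<le> p"
  shows "dist x y powr p \<le> 3 powr p * (dist x a powr p + dist a b powr p + dist y b powr p)"
proof -
  let ?m = "max (dist x a) (max (dist a b) (dist y b))"
  have "dist x y \<le> dist x a + dist a b + dist y b"
    using dist_triangle[of x y b] dist_triangle[of x b a] dist_commute[of b y] by linarith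
  also have "\<dots> \<le> 3 * ?m" by simp
  finally have "dist x y powr p \<le> (3 * ?m) powr p" using assms by (intro powr_mono2) auto
  also have "\<dots> = 3 powr p * ?m powr p" by (simp add: powr_mult)
  also have "?m powr p \<le> dist x a powr p + dist a b powr p + dist y b powr p"
    by (auto simp: max_def)
  finally show ?thesis by simp
qed

lemma transport_cost_couplings_finite:
  fixes \<mu> \<nu> :: "'a::polish_space measure"
  assumes "\<mu> \<in> Pp p" "\<nu> \<in> Pp p" "0 \<le> p" "\<gamma> \<in> couplings \<mu> \<nu>"
  shows "transport_cost p \<gamma> < \<infinity>"
proof -
  obtain a b where a: "(\<integral>\<^sup>+x. ennreal (dist x a powr p) \<partial>\<mu>) < \<infinity>"
    and b: "(\<integral>\<^sup>+x. ennreal (dist x b powr p) \<partial>\<nu>) < \<infinity>"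
    using assms(1,2) by (auto simp: Pp_def)
  interpret prob_space \<gamma> using couplingsD(1)[OF assms(4)] .
  have meas: "(\<lambda>x::'a. ennreal (dist x c powr p)) \<in> borel_measurable borel" for c by measurable
  have "ennreal (dist (fst z) (snd z) powr p) \<le> ennreal (3 powr p) *
      (ennreal (dist (fst z) a powr p) + ennreal (dist a b powr p) + ennreal (dist (snd z) b powr p))"
    for z :: "'a \<times> 'a"
  proof -
    have "ennreal (dist (fst z) (snd z) powr p) \<le>
        ennreal (3 powr p * (dist (fst z) a powr p + dist a b powr p + dist (snd z) b powr p))"
      by (intro ennreal_leI dist_powr_le_three assms(3))
    also have "\<dots> = ennreal (3 powr p) *
        ennreal (dist (fst z) a powr p + dist a b powr p + dist (snd z) b powr p)"
      by (rule ennreal_mult) auto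
    also have "ennreal (dist (fst z) a powr p + dist a b powr p + dist (snd z) b powr p) =
        ennreal (dist (fst z) a powr p) + ennreal (dist a b powr p) + ennreal (dist (snd z) b powr p)"
      by (simp only: ennreal_plus add_nonneg_nonneg powr_ge_zero)
    finally show ?thesis .
  qed
  then have "transport_cost p \<gamma> \<le> (\<integral>\<^sup>+z. ennreal (3 powr p) * (ennreal (dist (fst z) a powr p)
      + ennreal (dist a b powr p) + ennreal (dist (snd z) b powr p)) \<partial>\<gamma>)"
    unfolding transport_cost_def by (intro nn_integral_mono)
  also have "\<dots> = ennreal (3 powr p) * ((\<integral>\<^sup>+x. ennreal (dist x a powr p) \<partial>\<mu>)
      + ennreal (dist a b powr p) + (\<integral>\<^sup>+x. ennreal (dist x b powr p) \<partial>\<nu>))"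
    using measurable_couplings[OF assms(4)]
    by (simp add: nn_integral_cmult nn_integral_add emeasure_space_1
        nn_integral_couplings[OF assms(4) meas, symmetric])
  also have "\<dots> < \<infinity>" using a b by (simp add: ennreal_mult_less_top)
  finally show ?thesis .
qed

lemma Wp_less_imp_coupling:
  fixes \<mu> \<nu> :: "'a::polish_space measure"
  assumes "\<mu> \<in> Pp p" "\<nu> \<in> Pp p" "0 < p" "Wp p \<mu> \<nu> < r"
  shows "\<exists>\<gamma>\<in>couplings \<mu> \<nu>. transport_cost p \<gamma> < ennreal (r powr p)"
proof -
  let ?I = "INF \<gamma>\<in>couplings \<mu> \<nu>. transport_cost p \<gamma>"
  have "\<mu> \<Otimes>\<^sub>M \<nu> \<in> couplings \<mu> \<nu>"
    using assms(1,2) by (intro pair_measure_couplings) (auto simp: Pp_def prob_measures_def)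
  then have "?I < \<infinity>"
    using transport_cost_couplings_finite[OF assms(1,2)] assms(3) by (meson INF_lower le_less_trans less_imp_le)
  then obtain c where c: "?I = ennreal c" "0 \<le> c" by (cases ?I) auto
  have "c = (c powr (1/p)) powr p" using c(2) assms(3) by (simp add: powr_powr)
  also have "\<dots> < r powr p"
    using assms(3,4) c by (intro powr_less_mono2) (auto simp: Wp_transport_cost)
  finally have "?I < ennreal (r powr p)" using c by (metis ennreal_lessI le_less_trans)
  then show ?thesis by (simp add: INF_less_iff)
qed

lemma transport_cost_integrable:
  fixes \<gamma> :: "('a::polish_space \<times> 'a) measure"
  assumes "sets \<gamma> = sets borel" "transport_cost p \<gamma> < \<infinity>"
  shows "integrable \<gamma> (\<lambda>z. dist (fst z) (snd z) powr p)"
    and "transport_cost p \<gamma> = ennreal (\<integral>z. dist (fst z) (snd z) powr p \<partial>\<gamma>)"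
proof -
  have "(\<lambda>z. dist (fst z) (snd z) powr p) \<in> borel_measurable \<gamma>"
    unfolding measurable_cong_sets[OF assms(1) refl]
    by (intro powr_real_measurable borel_measurable_continuous_onI continuous_intros)
  then show int: "integrable \<gamma> (\<lambda>z. dist (fst z) (snd z) powr p)"
    using assms(2) by (intro integrableI_bounded) (simp_all add: transport_cost_def)
  show "transport_cost p \<gamma> = ennreal (\<integral>z. dist (fst z) (snd z) powr p \<partial>\<gamma>)"
    unfolding transport_cost_def using int by (intro nn_integral_eq_integral) auto
qed

lemma abs_diff_le_near_compact:
  fixes f :: "'a::metric_space \<Rightarrow> real"
  assumes bound: "\<And>x. \<bar>f x\<bar> \<le> M" and "0 < d" "0 \<le> p" "0 \<le> e"
    and near: "x \<in> K \<Longrightarrow> dist x y < d \<Longrightarrow> \<bar>f x - f y\<bar> < e"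
  shows "\<bar>f x - f y\<bar> \<le> e + 2*M * indicator (- K) x + 2*M / d powr p * dist x y powr p"
proof -
  have "0 \<le> M" using bound[of x] by linarith
  then have far: "0 \<le> 2*M / d powr p * dist x y powr p" and "0 \<le> 2*M * indicator (- K) x"
    by simp_all
  have diff: "\<bar>f x - f y\<bar> \<le> 2*M" using bound[of x] bound[of y] by linarith
  consider "x \<notin> K" | "x \<in> K" "dist x y < d" | "d \<le> dist x y" by fastforce
  then show ?thesis
  proof cases
    case 1
    then have "2*M * indicator (- K) x = 2*M" by simp
    then show ?thesis using diff far \<open>0 \<le> e\<close> by linarith
  next
    case 2
    then show ?thesis using near far \<open>0 \<le> 2*M * indicator (- K) x\<close> by linarith
  next
    case 3
    then have "2*M * d powr p \<le> 2*M * dist x y powr p"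
      using \<open>0 \<le> M\<close> \<open>0 < d\<close> \<open>0 \<le> p\<close> by (intro mult_left_mono powr_mono2) auto
    then have "2*M \<le> 2*M / d powr p * dist x y powr p"
      using \<open>0 < d\<close> by (simp add: field_simps)
    then show ?thesis using diff \<open>0 \<le> e\<close> \<open>0 \<le> 2*M * indicator (- K) x\<close> by linarith
  qed
qed

text \<open>Off a set of small \<open>\<gamma>\<close>-measure (tightness of \<open>\<mu>\<close>, Markov's inequality for the cost),
the first point lies in a compact set \<open>K\<close> and is moved by less than \<open>d\<close>, so \<open>f\<close> changes by
less than \<open>e\<close>.\<close>

lemma couplings_integral_close:
  fixes \<mu> :: "'a::polish_space measure" and f :: "'a \<Rightarrow> real"
  assumes \<mu>: "prob_space \<mu>" "sets \<mu> = sets borel"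
    and f: "continuous_on UNIV f" "\<And>x. \<bar>f x\<bar> \<le> M" and "0 < \<epsilon>" "0 \<le> p"
  obtains \<eta> where "0 < \<eta>"
    "\<And>\<nu> \<gamma>. \<gamma> \<in> couplings \<mu> \<nu> \<Longrightarrow> transport_cost p \<gamma> < ennreal \<eta> \<Longrightarrow>
       \<bar>(\<integral>x. f x \<partial>\<mu>) - (\<integral>x. f x \<partial>\<nu>)\<bar> \<le> \<epsilon>"
proof -
  have "0 \<le> M" using f(2)[of undefined] by linarith
  define e where "e = \<epsilon> / (1 + 4*M)"
  have "0 < e" using \<open>0 \<le> M\<close> \<open>0 < \<epsilon>\<close> by (simp add: e_def)
  obtain K where K: "compact K" "measure \<mu> (- K) < e"
    using prob_space_polish_tight[OF \<mu> \<open>0 < e\<close>] by blast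
  obtain d where d: "0 < d" "\<And>x y. x \<in> K \<Longrightarrow> dist x y < d \<Longrightarrow> \<bar>f x - f y\<bar> < e"
    using continuous_uniformly_near_compact[OF f(1) K(1) \<open>0 < e\<close>] by (metis dist_real_def)
  define \<eta> where "\<eta> = e * d powr p"
  show ?thesis
  proof (rule that)
    show "0 < \<eta>" using \<open>0 < e\<close> \<open>0 < d\<close> by (simp add: \<eta>_def)
    fix \<nu> \<gamma> assume \<gamma>: "\<gamma> \<in> couplings \<mu> \<nu>" and cost: "transport_cost p \<gamma> < ennreal \<eta>"
    interpret \<gamma>: prob_space \<gamma> using couplingsD(1)[OF \<gamma>] .
    have cost_finite: "transport_cost p \<gamma> < \<infinity>"
      using cost by (metis ennreal_less_top infinity_ennreal_def less_trans)
    define D where "D z = dist (fst z) (snd z) powr p" for z :: "'a \<times> 'a"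
    have D: "integrable \<gamma> D" "transport_cost p \<gamma> = ennreal (\<integral>z. D z \<partial>\<gamma>)"
      using transport_cost_integrable[OF couplingsD(2)[OF \<gamma>] cost_finite]
      unfolding D_def by auto
    then have "(\<integral>z. D z \<partial>\<gamma>) \<le> \<eta>"
      using cost \<open>0 < \<eta>\<close> by (simp add: D_def ennreal_less_iff)
    have "f \<in> borel_measurable borel" using f(1) by (rule borel_measurable_continuous_onI)
    have "-K \<in> sets borel" using K(1) by (simp add: compact_imp_closed borel_open)
    have int_f: "integrable \<gamma> (\<lambda>z. f (fst z))" "integrable \<gamma> (\<lambda>z. f (snd z))"
      using f(2) \<open>f \<in> borel_measurable borel\<close> measurable_couplings[OF \<gamma>]
      by (auto intro!: \<gamma>.integrable_const_bound[where B=M])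
    have int_K: "integrable \<gamma> (\<lambda>z. indicator (- K) (fst z) :: real)"
      using \<open>-K \<in> sets borel\<close> measurable_couplings[OF \<gamma>]
      by (auto intro!: \<gamma>.integrable_const_bound[where B=1])
    note int = int_f int_K
    have "\<bar>(\<integral>x. f x \<partial>\<mu>) - (\<integral>x. f x \<partial>\<nu>)\<bar> = \<bar>\<integral>z. f (fst z) - f (snd z) \<partial>\<gamma>\<bar>"
      using integral_couplings[OF \<gamma> \<open>f \<in> borel_measurable borel\<close>] int by simp
    also have "\<dots> \<le> (\<integral>z. \<bar>f (fst z) - f (snd z)\<bar> \<partial>\<gamma>)"
      by (rule integral_abs_bound)
    also have "\<dots> \<le> (\<integral>z. e + 2*M * indicator (- K) (fst z) + 2*M / d powr p * D z \<partial>\<gamma>)"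
      using int D(1) \<open>0 < d\<close> \<open>0 \<le> p\<close> \<open>0 < e\<close> d(2) unfolding D_def
      by (intro integral_mono abs_diff_le_near_compact[OF f(2)]) auto
    also have "\<dots> = e + 2*M * measure \<mu> (- K) + 2*M / d powr p * (\<integral>z. D z \<partial>\<gamma>)"
      using int D(1) integral_couplings(1)[OF \<gamma>, of "indicator (- K)"] \<open>-K \<in> sets borel\<close>
      using sets_eq_imp_space_eq[OF \<mu>(2)] by (simp add: \<gamma>.prob_space)
    also have "\<dots> \<le> e + 2*M * e + 2*M / d powr p * \<eta>"
      using K(2) \<open>(\<integral>z. D z \<partial>\<gamma>) \<le> \<eta>\<close> \<open>0 \<le> M\<close> by (intro add_mono mult_left_mono) auto
    also have "\<dots> = e * (1 + 4*M)"
      using \<open>0 < d\<close> by (simp add: \<eta>_def algebra_simps)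
    also have "\<dots> = \<epsilon>"
      using \<open>0 \<le> M\<close> by (simp add: e_def)
    finally show "\<bar>(\<integral>x. f x \<partial>\<mu>) - (\<integral>x. f x \<partial>\<nu>)\<bar> \<le> \<epsilon>" .
  qed
qed

lemma Wp_small_imp_integral_close:
  fixes \<mu> :: "'a::polish_space measure" and f :: "'a \<Rightarrow> real"
  assumes "\<mu> \<in> Pp p" "0 < p" "continuous_on UNIV f" "\<And>x. \<bar>f x\<bar> \<le> M" "0 < \<epsilon>"
  obtains \<delta> where "0 < \<delta>"
    "\<And>\<nu>. \<nu> \<in> Pp p \<Longrightarrow> Wp p \<mu> \<nu> < \<delta> \<Longrightarrow> \<bar>(\<integral>x. f x \<partial>\<mu>) - (\<integral>x. f x \<partial>\<nu>)\<bar> \<le> \<epsilon>"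
proof -
  have "prob_space \<mu>" "sets \<mu> = sets borel" using assms(1) by (auto simp: Pp_def prob_measures_def)
  then obtain \<eta> where \<eta>: "0 < \<eta>"
    "\<And>\<nu> \<gamma>. \<gamma> \<in> couplings \<mu> \<nu> \<Longrightarrow> transport_cost p \<gamma> < ennreal \<eta> \<Longrightarrow>
       \<bar>(\<integral>x. f x \<partial>\<mu>) - (\<integral>x. f x \<partial>\<nu>)\<bar> \<le> \<epsilon>"
    using couplings_integral_close assms(2-5) less_imp_le by metis
  show ?thesis
  proof (rule that)
    show "0 < \<eta> powr (1/p)" using \<eta>(1) by simp
    fix \<nu> assume "\<nu> \<in> Pp p" "Wp p \<mu> \<nu> < \<eta> powr (1/p)"
    then obtain \<gamma> where "\<gamma> \<in> couplings \<mu> \<nu>" "transport_cost p \<gamma> < ennreal ((\<eta> powr (1/p)) powr p)"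
      using Wp_less_imp_coupling assms(1,2) by blast
    moreover have "(\<eta> powr (1/p)) powr p = \<eta>" using \<eta>(1) assms(2) by (simp add: powr_powr)
    ultimately show "\<bar>(\<integral>x. f x \<partial>\<mu>) - (\<integral>x. f x \<partial>\<nu>)\<bar> \<le> \<epsilon>" using \<eta>(2) by simp
  qed
qed

lemma Wp_tendsto_imp_limitin_narrow:
  fixes \<mu> :: "'a::polish_space measure"
  assumes "0 < p" "\<mu> \<in> Pp p" "\<forall>\<^sub>F n in F. \<nu> n \<in> Pp p" "((\<lambda>n. Wp p \<mu> (\<nu> n)) \<longlongrightarrow> 0) F"
  shows "limitin narrow_topology \<nu> \<mu> F"
  unfolding narrow_topology_def
proof (rule limitin_topology_generated_byI)
  let ?S = "{{\<mu> \<in> prob_measures. (\<integral>x. f x \<partial>\<mu>) \<in> U} | f U.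
      continuous_on UNIV f \<and> bounded (range f) \<and> open (U :: real set)} :: 'a measure set set"
  have "{\<mu> \<in> prob_measures. (\<integral>x. (\<lambda>_. 0::real) x \<partial>\<mu>) \<in> UNIV} \<in> ?S"
    by (intro CollectI exI[of _ "\<lambda>_. 0::real"] exI[of _ UNIV]) auto
  then show "\<mu> \<in> \<Union>?S" using assms(2) by (auto simp: Pp_def)
  fix U assume "U \<in> ?S" "\<mu> \<in> U"
  from \<open>U \<in> ?S\<close> obtain f and V :: "real set"
    where U: "U = {\<mu> \<in> prob_measures. (\<integral>x. f x \<partial>\<mu>) \<in> V}"
      and f: "continuous_on UNIV f" "bounded (range f)" and "open V"
    by blast
  with \<open>\<mu> \<in> U\<close> have "(\<integral>x. f x \<partial>\<mu>) \<in> V" by simp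
  obtain M where M: "\<And>x. \<bar>f x\<bar> \<le> M" using f(2) unfolding bounded_iff by auto
  obtain e where "0 < e" and e: "ball (\<integral>x. f x \<partial>\<mu>) e \<subseteq> V"
    using \<open>open V\<close> \<open>(\<integral>x. f x \<partial>\<mu>) \<in> V\<close> open_contains_ball by blast
  obtain \<delta> where "0 < \<delta>" and \<delta>:
    "\<And>\<nu>. \<nu> \<in> Pp p \<Longrightarrow> Wp p \<mu> \<nu> < \<delta> \<Longrightarrow> \<bar>(\<integral>x. f x \<partial>\<mu>) - (\<integral>x. f x \<partial>\<nu>)\<bar> \<le> e/2"
    using Wp_small_imp_integral_close[OF assms(2,1) f(1) M, of "e/2"] \<open>0 < e\<close> by auto
  have "\<forall>\<^sub>F n in F. Wp p \<mu> (\<nu> n) < \<delta>" using order_tendstoD(2)[OF assms(4) \<open>0 < \<delta>\<close>] .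
  with assms(3) show "\<forall>\<^sub>F n in F. \<nu> n \<in> U"
  proof eventually_elim
    case (elim n)
    then have "\<bar>(\<integral>x. f x \<partial>\<mu>) - (\<integral>x. f x \<partial>\<nu> n)\<bar> \<le> e/2" by (rule \<delta>)
    then have "(\<integral>x. f x \<partial>\<nu> n) \<in> ball (\<integral>x. f x \<partial>\<mu>) e"
      using \<open>0 < e\<close> by (simp add: dist_real_def)
    then show ?case using e elim(1) U by (auto simp: Pp_def)
  qed
qed

lemma Wp_tendsto_imp_limitin_sigma_top:
  fixes \<mu> :: "'a::polish_space measure"
  assumes "0 < p" "\<mu> \<in> Pp p" "\<forall>\<^sub>F n in F. \<nu> n \<in> Pp p" "((\<lambda>n. Wp p \<mu> (\<nu> n)) \<longlongrightarrow> 0) F"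
  shows "limitin (sigma_top p) \<nu> \<mu> F"
  unfolding sigma_top_def limitin_subtopology
  using assms Wp_tendsto_imp_limitin_narrow by blast

lemma ac_on_Wp_tendsto_from_left:
  assumes "ac_on p T \<rho>" "t \<le> T" "s \<longlonglongrightarrow> t" "\<And>n. 0 \<le> s n \<and> s n < t"
  shows "(\<lambda>n. Wp p (\<rho> t) (\<rho> (s n))) \<longlonglongrightarrow> 0"
proof -
  obtain m where m: "set_integrable lborel {0..T} m"
    and W: "\<forall>s t. 0 \<le> s \<and> s < t \<and> t \<le> T \<longrightarrow> Wp p (\<rho> t) (\<rho> s) \<le> (LINT \<tau>:{s..t}|lborel. m \<tau>)"
    using assms(1) unfolding ac_on_def by blast
  have "0 \<le> t" using assms(4)[of 0] by simp
  have LINT: "(LINT \<tau>:{u..t}|lborel. m \<tau>) = integral {u..t} m" if "0 \<le> u" for u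
    using set_integrable_subset[OF m] that assms(2) by (intro set_borel_integral_eq_integral(2)) auto
  have "m integrable_on {0..t}"
    using set_integrable_subset[OF m] assms(2) by (intro set_borel_integral_eq_integral(1)) auto
  then have "continuous_on {0..t} (\<lambda>u. integral {u..t} m)"
    by (rule indefinite_integral_continuous_1')
  moreover have "\<forall>n. s n \<in> {0..t}" using assms(4) by (simp add: less_imp_le)
  ultimately have "(\<lambda>n. integral {s n..t} m) \<longlonglongrightarrow> integral {t..t} m"
    using \<open>0 \<le> t\<close> assms(3)
    by (intro continuous_on_tendsto_compose[where f="\<lambda>u. integral {u..t} m"] always_eventually) auto
  then have lim: "(\<lambda>n. integral {s n..t} m) \<longlonglongrightarrow> 0" by simp
  have lower: "\<forall>n. 0 \<le> Wp p (\<rho> t) (\<rho> (s n))" by (simp add: Wp_def)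
  have upper: "\<forall>n. Wp p (\<rho> t) (\<rho> (s n)) \<le> integral {s n..t} m"
    using W assms(2,4) LINT by (metis order.refl)
  show ?thesis
    using tendsto_sandwich[OF always_eventually always_eventually, OF lower upper tendsto_const lim] .
qed

lemma ac_infty_AE_in_closedin:
  fixes \<rho> :: "real \<Rightarrow> 'a::polish_space measure"
  assumes "ac_infty p \<rho>" "0 < p" "closedin (sigma_top p) S"
    and "AE t in lborel. 0 < t \<longrightarrow> \<rho> t \<in> S" and "0 < t"
  shows "\<rho> t \<in> S"
proof -
  obtain s where s: "s \<longlonglongrightarrow> t" "\<And>n. 0 < s n \<and> s n < t \<and> (0 < s n \<longrightarrow> \<rho> (s n) \<in> S)"
    using AE_lborel_obtain_seq_from_left[OF assms(4,5)] by blast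
  have "ac_on p t \<rho>" using assms(1,5) by (simp add: ac_infty_def)
  then have "(\<lambda>n. Wp p (\<rho> t) (\<rho> (s n))) \<longlonglongrightarrow> 0"
    by (rule ac_on_Wp_tendsto_from_left) (use s in \<open>auto simp: less_imp_le\<close>)
  then have "limitin (sigma_top p) (\<lambda>n. \<rho> (s n)) (\<rho> t) sequentially"
  proof (intro Wp_tendsto_imp_limitin_sigma_top always_eventually allI)
    show "\<rho> t \<in> Pp p" "\<rho> (s n) \<in> Pp p" for n
      using assms(1,5) s(2)[of n] by (simp_all add: ac_infty_def)
  qed (use assms(2) in simp_all)
  then show ?thesis
    by (rule limitin_closedin) (use assms(3) s(2) in \<open>auto intro: always_eventually\<close>)
qed

theorem lemma3p1:
  fixes p :: real
    and E :: "'a::polish_space measure \<Rightarrow> ereal"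
    and G :: "'a measure \<Rightarrow> ennreal"
    and \<rho> :: "real \<Rightarrow> 'a measure"
    and \<rho>0 :: "'a measure"
  assumes "1 < p"
    and "proper_fun p E"
    and "weak_upper_gradient p E G"
    and "\<rho>0 \<in> Z_set p E"
    and "curve_max_slope p E G \<rho>"
    and "\<rho> 0 = \<rho>0"
    and "A1 p E" and "A3 p G"
    and "A2 p E \<or> A2' p E \<rho>"
  shows "rel_compact_in (sigma_top p) (\<Union>t\<in>{0..}. {\<rho> t})"
proof -
  obtain \<phi> where ac: "ac_infty p \<rho>" and mono: "\<forall>s t. 0 \<le> s \<and> s \<le> t \<longrightarrow> \<phi> t \<le> \<phi> s"
    and ae: "AE t in lborel. t \<ge> 0 \<longrightarrow> E (\<rho> t) = ereal (\<phi> t)"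
    using assms(5) unfolding curve_max_slope_def by blast
  obtain r0 where r0: "E (\<rho> 0) = ereal r0"
    using assms(2,4,6) by (cases "E (\<rho> 0)") (auto simp: Z_set_def proper_fun_def)
  define S where "S = {\<mu> \<in> Pp p. E \<mu> \<le> ereal (max (\<phi> 0) r0)}"
  have "closedin (sigma_top p) S" using assms(7) by (simp add: A1_def S_def)
  moreover have "AE t in lborel. 0 < t \<longrightarrow> \<rho> t \<in> S"
    using ae by eventually_elim (use mono ac in \<open>force simp: S_def ac_infty_def le_max_iff_disj\<close>)
  ultimately have "\<rho> t \<in> S" if "0 \<le> t" for t
    using that ac assms(1) r0 ac_infty_AE_in_closedin[of p \<rho> S t]
    by (cases "t = 0") (auto simp: S_def ac_infty_def)
  then have traj: "(\<Union>t\<in>{0..}. {\<rho> t}) \<subseteq> S" by auto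
  from assms(9) show ?thesis
  proof
    assume "A2 p E"
    then have "rel_compact_in (sigma_top p) S" unfolding A2_def S_def by blast
    then show ?thesis using traj by (rule rel_compact_in_subset)
  next
    assume "A2' p E \<rho>"
    then obtain Y where "\<forall>t\<ge>0. \<rho> t \<in> Y"
      and "rel_compact_in (sigma_top p) (S \<inter> Y)"
      unfolding A2'_def S_def by (auto simp only: Int_def mem_Collect_eq conj_ac)
    moreover have "(\<Union>t\<in>{0..}. {\<rho> t}) \<subseteq> S \<inter> Y" using traj calculation(1) by auto
    ultimately show ?thesis by (elim rel_compact_in_subset)
  qed
qed

end
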